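(* Let $k\ge3$ and $d$ a positive integer, and let $z^*$ be the minimal spike of degree $(k-2)(2^d-1)$. If $d>\delta(k-2)$, then $\omega_i(z^* )=k-2$ for $1\le i\le d-\delta(k-2)$ and $\omega_i(z^* )<k-2$ for $i>d-\delta(k-2)$.
   Context: For a positive integer $a$, $\alpha(a)$ is the number of ones in its binary expansion, $\zeta(a)$ is the largest $u$ with $2^u\mid a$, and $\delta(a)=a-\alpha(a)-\zeta(a)$. For a monomial $x=x_1^{a_1}\cdots x_k^{a_k}$, $\omega_i(x)=\sum_j\alpha_{i-1}(a_j)$ where $\alpha_r(a)$ is the $r$-th binary digit of $a$. For a positive integer $n$, $\mu(n)$ is the least $r$ with $n=\sum_{i=1}^r(2^{u_i}-1)$, $u_i>0$; if $\mu(n)=s$ then $n=\sum_{i=1}^s(2^{e_i}-1)$ for unique integers $e_1>e_2>\dots>e_{s-1}\ge e_s>0$, and the minimal spike of degree $n$ is $\prod_{i=1}^sx_i^{2^{e_i}-1}$. *)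

theory Defs
  imports Main
begin

definition bin_digit :: "nat \<Rightarrow> nat \<Rightarrow> nat" where
  "bin_digit r a = (a div 2 ^ r) mod 2"

fun alpha :: "nat \<Rightarrow> nat" where
  "alpha a = (if a = 0 then 0 else a mod 2 + alpha (a div 2))"

declare alpha.simps[simp del]

text \<open>zeta(a): largest u with 2^u dividing a (a positive).\<close>
definition zeta :: "nat \<Rightarrow> nat" where
  "zeta a = (GREATEST u. 2 ^ u dvd a)"

definition delta :: "nat \<Rightarrow> int" where
  "delta a = int a - int (alpha a) - int (zeta a)"

text \<open>A monomial x_1^{a_1} ... x_k^{a_k} is represented by its exponent list [a_1,...,a_k].
  omega_i(x) = sum_j alpha_{i-1}(a_j).\<close>
definition omega :: "nat \<Rightarrow> nat list \<Rightarrow> nat" where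
  "omega i x = (\<Sum>a\<leftarrow>x. bin_digit (i - 1) a)"

definition mu :: "nat \<Rightarrow> nat" where
  "mu n = (LEAST r. \<exists>us :: nat list. length us = r \<and> (\<forall>u\<in>set us. u > 0)
                      \<and> (\<Sum>u\<leftarrow>us. 2 ^ u - 1) = n)"

text \<open>The exponents e_1 > e_2 > ... > e_{s-1} >= e_s > 0, s = mu(n), with
  n = sum (2^{e_i} - 1); listed as [e_1, ..., e_s].\<close>
definition spike_exps :: "nat \<Rightarrow> nat list" where
  "spike_exps n = (THE es. length es = mu n \<and> (\<forall>e\<in>set es. e > 0)
      \<and> (\<forall>i. i + 2 < length es \<longrightarrow> es ! i > es ! (i + 1))
      \<and> (2 \<le> length es \<longrightarrow> es ! (length es - 2) \<ge> es ! (length es - 1))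
      \<and> (\<Sum>e\<leftarrow>es. 2 ^ e - 1) = n)"

text \<open>The minimal spike of degree n, as the exponent list of prod_{i=1}^s x_i^{2^{e_i}-1}.\<close>
definition minimal_spike :: "nat \<Rightarrow> nat list" where
  "minimal_spike n = map (\<lambda>e. 2 ^ e - 1) (spike_exps n)"

end

theory Submission
  imports Defs
begin

text \<open>Write \<open>m = k - 2 = 2^j q\<close> with \<open>q\<close> odd and \<open>D = d - \<delta>(m)\<close>. Then
  \<open>m (2^d - 1) + m = 2^(j+d) q\<close>, and splitting the lowest binary digit of \<open>2^(j+d) q\<close> as
  \<open>2^D + 2^D + 2^(D+1) + \<dots> + 2^(j+d-1)\<close> writes \<open>m (2^d - 1)\<close> as a sum of exactly \<open>m\<close>
  numbers \<open>2^e - 1\<close> with exponents \<open>e_1 > \<dots> > e_(m-1) \<ge> e_m = D\<close>. No shorter sum exists: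
  \<open>y < m\<close> terms would make \<open>m 2^d - (m - y)\<close> a sum of \<open>y\<close> powers of two, hence of binary
  weight at most \<open>y\<close>, whereas subtracting \<open>t \<ge> 1\<close> from \<open>x\<close> lowers the binary weight by at most
  \<open>t - \<zeta>(x)\<close>; together this forces \<open>d \<le> \<delta>(m)\<close>. So the representation above is the minimal
  spike. All its exponents are at least \<open>D\<close> and the last one equals \<open>D\<close>, so each of the \<open>m\<close>
  exponents contributes a one to the binary digits \<open>0, \<dots>, D - 1\<close>, while digit \<open>D\<close> and all
  higher ones miss the last exponent.\<close>

subsection \<open>Binary weight and 2-adic valuation\<close>

lemma alpha_0 [simp]: "alpha 0 = 0"
  by (simp add: alpha.simps)

lemma alpha_double_plus: "b < 2 \<Longrightarrow> alpha (2 * q + b) = b + alpha q"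
  by (cases "2 * q + b = 0") (simp_all add: alpha.simps[of "2 * q + b"])

lemma alpha_double [simp]: "alpha (2 * q) = alpha q"
  using alpha_double_plus[of 0 q] by simp

lemma alpha_pow2_mult: "alpha (2 ^ j * q) = alpha q"
  by (induction j) (simp_all add: mult.assoc)

lemma alpha_le: "alpha x \<le> x"
proof (induction x rule: less_induct)
  case (less x)
  show ?case
  proof (cases "x = 0")
    case False
    then have "alpha x = x mod 2 + alpha (x div 2)"
      by (simp add: alpha.simps[of x])
    moreover have "alpha (x div 2) \<le> x div 2" using less False by simp
    ultimately show ?thesis by presburger
  qed simp
qed

lemma pow2_mult_odd_decomp:
  assumes "x > 0"
  obtains j q :: nat where "odd q" "x = 2 ^ j * q"
  using assms
proof (induction x arbitrary: thesis rule: less_induct)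
  case (less x)
  show ?case
  proof (cases "odd x")
    case True
    then show ?thesis using less.prems(1)[of x 0] by simp
  next
    case False
    then obtain y where y: "x = 2 * y" by blast
    with less.prems(2) have "0 < y" "y < x" by auto
    then show ?thesis
      using less.IH[of y] less.prems(1) y by (metis mult.assoc power_Suc)
  qed
qed

lemma zeta_pow2_mult_odd: "odd q \<Longrightarrow> zeta (2 ^ j * q) = j"
  unfolding zeta_def
proof (rule Greatest_equality)
  fix u assume "odd q" and dvd: "2 ^ u dvd (2::nat) ^ j * q"
  show "u \<le> j"
  proof (rule ccontr)
    assume "\<not> u \<le> j"
    then have "2 ^ j * 2 dvd (2::nat) ^ u"
      by (metis le_imp_power_dvd not_le power_Suc2 Suc_leI)
    with dvd have "2 ^ j * 2 dvd (2::nat) ^ j * q"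
      using dvd_trans by blast
    with \<open>odd q\<close> show False by simp
  qed
qed simp

lemma alpha_pow2_mult_odd_minus_one:
  "odd q \<Longrightarrow> alpha (2 ^ j * q - 1) + 1 = alpha q + j"
proof (induction j)
  case 0
  then obtain r where "q = 2 * r + 1" by (blast elim: oddE)
  then show ?case using alpha_double_plus[of 1 r] by simp
next
  case (Suc j)
  then have "2 ^ j * q \<ge> 1" by (simp add: Suc_leI odd_pos)
  moreover have "(2::nat) ^ Suc j * q = 2 * (2 ^ j * q)" by simp
  ultimately have "2 ^ Suc j * q - 1 = 2 * (2 ^ j * q - 1) + 1" by linarith
  then show ?case using alpha_double_plus[of 1 "2 ^ j * q - 1"] Suc by simp
qed

lemma alpha_minus_one: "x > 0 \<Longrightarrow> alpha (x - 1) + 1 = alpha x + zeta x"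
proof (elim pow2_mult_odd_decomp)
  fix j q :: nat assume "odd q" "x = 2 ^ j * q"
  then show ?thesis
    using alpha_pow2_mult_odd_minus_one[of q j] by (simp add: zeta_pow2_mult_odd alpha_pow2_mult)
qed

lemma alpha_diff_ge: "1 \<le> t \<Longrightarrow> t \<le> x \<Longrightarrow> alpha x + zeta x \<le> alpha (x - t) + t"
proof (induction t)
  case (Suc t)
  show ?case
  proof (cases "t = 0")
    case True
    with Suc show ?thesis using alpha_minus_one[of x] by simp
  next
    case False
    with Suc have "alpha x + zeta x \<le> alpha (x - t) + t" by simp
    moreover have "alpha (x - t) \<le> alpha (x - t - 1) + 1"
      using alpha_minus_one[of "x - t"] Suc.prems by simp
    ultimately show ?thesis by simp
  qed
qed simp

lemma alpha_add_pow2: "alpha (a + 2 ^ u) \<le> alpha a + 1"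
proof (induction u arbitrary: a)
  case 0
  show ?case using alpha_minus_one[of "a + 1"] by simp
next
  case (Suc u)
  obtain q b where qb: "a = 2 * q + b" "b < 2"
    by (metis div_mult_mod_eq mod_less_divisor zero_less_numeral mult.commute)
  then have "alpha (a + 2 ^ Suc u) = b + alpha (q + 2 ^ u)"
    using alpha_double_plus[of b "q + 2 ^ u"] by (simp add: algebra_simps)
  also have "\<dots> \<le> b + alpha q + 1" using Suc by simp
  also have "\<dots> = alpha a + 1" using alpha_double_plus qb by simp
  finally show ?case .
qed

lemma alpha_sum_list_pow2_le: "alpha (\<Sum>u\<leftarrow>us. 2 ^ u) \<le> length us"
proof (induction us)
  case (Cons u us)
  then show ?case
    using alpha_add_pow2[of "\<Sum>u\<leftarrow>us. 2 ^ u" u] by (simp add: add.commute)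
qed simp

lemma sum_list_pow2_minus_one:
  "(\<Sum>e\<leftarrow>es. 2 ^ e - 1) + length es = (\<Sum>e\<leftarrow>es. (2::nat) ^ e)"
  by (induction es) (simp_all add: Suc_leI)

lemma sum_list_pow2_shift:
  "(\<Sum>e\<leftarrow>map (\<lambda>e. e + c) es. (2::nat) ^ e) = 2 ^ c * (\<Sum>e\<leftarrow>es. 2 ^ e)"
  by (induction es) (simp_all add: power_add algebra_simps)

lemma sum_list_pow2_upt: "a \<le> b \<Longrightarrow> (\<Sum>e\<leftarrow>[a..<b]. (2::nat) ^ e) + 2 ^ a = 2 ^ b"
  by (induction b) (auto simp: le_Suc_eq)

lemma bin_digit_pow2_minus_one: "bin_digit r (2 ^ e - 1) = (if r < e then 1 else 0)"
proof (cases "r < e")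
  case True
  then have "(2::nat) ^ e = 2 ^ (e - r) * 2 ^ r" by (simp flip: power_add)
  then have "(2::nat) ^ e - 1 = (2 ^ r - 1) + (2 ^ (e - r) - 1) * 2 ^ r"
    by (simp add: algebra_simps diff_mult_distrib)
  also have "\<dots> div 2 ^ r = 2 ^ (e - r) - 1"
    by (subst div_mult_self1) simp_all
  finally have "((2::nat) ^ e - 1) div 2 ^ r = 2 ^ (e - r) - 1" .
  moreover have "odd ((2::nat) ^ (e - r) - 1)" using True by simp
  then have "((2::nat) ^ (e - r) - 1) mod 2 = 1" by (metis odd_iff_mod_2_eq_one)
  ultimately show ?thesis using True by (simp add: bin_digit_def)
next
  case False
  then have "(2::nat) ^ e \<le> 2 ^ r" by simp
  then have "(2::nat) ^ e - 1 < 2 ^ r" using zero_less_power[of "2::nat" e] by linarith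
  with False show ?thesis by (simp add: bin_digit_def)
qed

fun bit_positions :: "nat \<Rightarrow> nat list" where
  "bit_positions x =
    (if x = 0 then [] else (if odd x then [0] else []) @ map Suc (bit_positions (x div 2)))"

declare bit_positions.simps [simp del]

lemma bit_positions_props:
  "(\<Sum>e\<leftarrow>bit_positions x. (2::nat) ^ e) = x
   \<and> length (bit_positions x) = alpha x \<and> sorted_wrt (<) (bit_positions x)"
proof (induction x rule: less_induct)
  case (less x)
  show ?case
  proof (cases "x = 0")
    case True
    then show ?thesis by (simp add: bit_positions.simps)
  next
    case False
    have bp: "bit_positions x = (if odd x then [0] else []) @ map Suc (bit_positions (x div 2))"
      using False by (simp add: bit_positions.simps[of x])
    have "alpha x = x mod 2 + alpha (x div 2)"
      using False by (simp add: alpha.simps[of x])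
    moreover have "(\<Sum>e\<leftarrow>map Suc (bit_positions (x div 2)). (2::nat) ^ e) = 2 * (x div 2)"
      using less False sum_list_pow2_shift[of 1 "bit_positions (x div 2)"] by simp
    moreover have "x = 2 * (x div 2) + x mod 2" by simp
    ultimately show ?thesis
      using less False bp by (auto simp: sorted_wrt_append sorted_wrt_map odd_iff_mod_2_eq_one)
  qed
qed

text \<open>The lowest binary digit \<open>2^z\<close> of \<open>2^z q\<close> is split as \<open>2^D + (2^D + \<dots> + 2^(z-1))\<close>.\<close>
lemma pow2_mult_odd_as_sum_pow2:
  assumes "odd q" "D \<le> z"
  obtains A where "(\<Sum>e\<leftarrow>A @ [D]. (2::nat) ^ e) = 2 ^ z * q" "length (A @ [D]) = alpha q + z - D"
    "sorted_wrt (>) A" "\<forall>e\<in>set A. D \<le> e"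
proof -
  obtain q' where q': "q = 2 * q' + 1" using \<open>odd q\<close> by (blast elim: oddE)
  define B where "B = bit_positions q'"
  have B: "(\<Sum>e\<leftarrow>B. (2::nat) ^ e) = q'" "length B = alpha q'" "sorted_wrt (<) B"
    using bit_positions_props[of q'] by (simp_all add: B_def)
  define A where "A = rev (map (\<lambda>e. e + (z + 1)) B) @ rev [D..<z]"
  have "(\<Sum>e\<leftarrow>A @ [D]. (2::nat) ^ e)
      = (\<Sum>e\<leftarrow>map (\<lambda>e. e + (z + 1)) B. 2 ^ e) + ((\<Sum>e\<leftarrow>[D..<z]. 2 ^ e) + 2 ^ D)"
    by (simp add: A_def rev_map[symmetric] sum_list_rev)
  also have "\<dots> = 2 ^ (z + 1) * q' + 2 ^ z"
    using sum_list_pow2_shift[of "z + 1" B] sum_list_pow2_upt[OF \<open>D \<le> z\<close>] B(1) by simp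
  also have "\<dots> = 2 ^ z * q" using q' by (simp add: algebra_simps)
  finally have "(\<Sum>e\<leftarrow>A @ [D]. (2::nat) ^ e) = 2 ^ z * q" .
  moreover have "length (A @ [D]) = alpha q + z - D"
    using B(2) q' alpha_double_plus[of 1 q'] \<open>D \<le> z\<close> by (simp add: A_def)
  moreover have "sorted_wrt (>) A" "\<forall>e\<in>set A. D \<le> e"
    using B(3) \<open>D \<le> z\<close> by (auto simp: A_def sorted_wrt_append sorted_wrt_rev sorted_wrt_map)
  ultimately show ?thesis using that by blast
qed

subsection \<open>Uniqueness of the spike exponents\<close>

definition spike_shape :: "nat list \<Rightarrow> bool" where
  "spike_shape es \<longleftrightarrow> (\<forall>i. i + 2 < length es \<longrightarrow> es ! i > es ! (i + 1))
      \<and> (2 \<le> length es \<longrightarrow> es ! (length es - 2) \<ge> es ! (length es - 1))"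

fun spike_shape_rec :: "nat list \<Rightarrow> bool" where
  "spike_shape_rec [] = True"
| "spike_shape_rec [x] = True"
| "spike_shape_rec [x, y] = (y \<le> x)"
| "spike_shape_rec (x # y # z # r) = (y < x \<and> spike_shape_rec (y # z # r))"

lemma spike_shape_imp_rec: "spike_shape es \<Longrightarrow> spike_shape_rec es"
proof (induction es rule: spike_shape_rec.induct)
  case (4 x y z r)
  have "y < x"
    using "4.prems"[unfolded spike_shape_def, THEN conjunct1, rule_format, of 0] by simp
  moreover have "spike_shape (y # z # r)"
    unfolding spike_shape_def
  proof (intro conjI allI impI)
    fix i assume "i + 2 < length (y # z # r)"
    then show "(y # z # r) ! i > (y # z # r) ! (i + 1)"
      using "4.prems" unfolding spike_shape_def by (metis add_Suc length_Cons nth_Cons_Suc Suc_less_eq)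
  next
    show "(y # z # r) ! (length (y # z # r) - 2) \<ge> (y # z # r) ! (length (y # z # r) - 1)"
      using "4.prems" unfolding spike_shape_def by (simp add: nth_Cons')
  qed
  ultimately show ?case using "4.IH" by simp
qed (simp_all add: spike_shape_def)

lemma spike_shape_snoc:
  assumes "sorted_wrt (>) A" "\<forall>a\<in>set A. y \<le> a"
  shows "spike_shape (A @ [y])"
  unfolding spike_shape_def
proof (intro conjI allI impI)
  fix i assume "i + 2 < length (A @ [y])"
  then show "(A @ [y]) ! i > (A @ [y]) ! (i + 1)"
    using sorted_wrt_nth_less[OF assms(1), of i "i + 1"] by (simp add: nth_append)
next
  assume "2 \<le> length (A @ [y])"
  then have "A ! (length A - 1) \<in> set A" by simp
  with assms(2) show "(A @ [y]) ! (length (A @ [y]) - 2) \<ge> (A @ [y]) ! (length (A @ [y]) - 1)"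
    by (simp add: nth_append)
qed

lemma spike_shape_rec_Cons: "spike_shape_rec (x # t) \<Longrightarrow> spike_shape_rec t"
  by (cases t rule: spike_shape_rec.cases) auto

lemma sum_list_pow2_le_if_spike_shape_rec:
  "spike_shape_rec (x # t) \<Longrightarrow> (\<Sum>e\<leftarrow>x # t. (2::nat) ^ e) \<le> 2 ^ Suc x"
proof (induction t arbitrary: x)
  case (Cons y r)
  show ?case
  proof (cases r)
    case Nil
    with Cons.prems show ?thesis by simp
  next
    case (Cons z r')
    with Cons.prems have "y < x" "spike_shape_rec (y # r)" by auto
    then have "(\<Sum>e\<leftarrow>y # r. (2::nat) ^ e) \<le> 2 ^ Suc y" "(2::nat) ^ Suc y \<le> 2 ^ x"
      using Cons.IH by (simp_all del: power_Suc)
    then show ?thesis by simp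
  qed
qed simp

text \<open>A larger head exponent already outweighs the whole other sum, so equal sums of
  equally many powers force equal heads.\<close>
lemma spike_shape_rec_head_eq:
  assumes "spike_shape_rec (h # t)" "spike_shape_rec (g # s)" "length t = length s"
    and "(\<Sum>e\<leftarrow>h # t. (2::nat) ^ e) = (\<Sum>e\<leftarrow>g # s. 2 ^ e)"
  shows "h = g"
proof -
  have no_less: False
    if "spike_shape_rec (h # t)" "spike_shape_rec (g # s)" "length t = length s"
      "(\<Sum>e\<leftarrow>h # t. (2::nat) ^ e) = (\<Sum>e\<leftarrow>g # s. 2 ^ e)" "g < h" for h t g s
  proof -
    have "(\<Sum>e\<leftarrow>g # s. (2::nat) ^ e) \<le> 2 ^ Suc g"
      using sum_list_pow2_le_if_spike_shape_rec that(2) .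
    also have "(2::nat) ^ Suc g \<le> 2 ^ h" using \<open>g < h\<close> by (simp del: power_Suc)
    moreover have "2 ^ h + (\<Sum>e\<leftarrow>t. 2 ^ e) = (\<Sum>e\<leftarrow>g # s. (2::nat) ^ e)"
      using that(4) by simp
    ultimately have "(\<Sum>e\<leftarrow>t. (2::nat) ^ e) = 0" by linarith
    then have "t = []" "s = []" using that(3) by auto
    with that(4,5) show False by simp
  qed
  show ?thesis
    using no_less[of h t g s] no_less[of g s h t] assms by (metis linorder_neqE_nat)
qed

lemma spike_shape_rec_unique:
  "spike_shape_rec xs \<Longrightarrow> spike_shape_rec ys \<Longrightarrow> length xs = length ys
   \<Longrightarrow> (\<Sum>e\<leftarrow>xs. (2::nat) ^ e) = (\<Sum>e\<leftarrow>ys. 2 ^ e) \<Longrightarrow> xs = ys"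
proof (induction xs arbitrary: ys)
  case (Cons h t)
  then obtain g s where ys: "ys = g # s" by (cases ys) auto
  with Cons.prems have "h = g" by (intro spike_shape_rec_head_eq[of h t g s]) auto
  with Cons ys spike_shape_rec_Cons show ?case by auto
qed simp

lemma spike_exps_eq_The:
  "spike_exps n = (THE es. spike_shape es \<and> length es = mu n \<and> (\<forall>e\<in>set es. e > 0)
                         \<and> (\<Sum>e\<leftarrow>es. 2 ^ e - 1) = n)"
  unfolding spike_exps_def spike_shape_def by (simp only: conj_ac)

lemma spike_exps_eqI:
  assumes "spike_shape es" "length es = mu n" "\<forall>e\<in>set es. e > 0" "(\<Sum>e\<leftarrow>es. 2 ^ e - 1) = n"
  shows "spike_exps n = es"
  unfolding spike_exps_eq_The
proof (rule the_equality)
  fix fs assume fs: "spike_shape fs \<and> length fs = mu n \<and> (\<forall>e\<in>set fs. e > 0)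
                    \<and> (\<Sum>e\<leftarrow>fs. 2 ^ e - 1) = n"
  then have "(\<Sum>e\<leftarrow>fs. (2::nat) ^ e) = (\<Sum>e\<leftarrow>es. 2 ^ e)"
    using sum_list_pow2_minus_one[of fs] sum_list_pow2_minus_one[of es] assms(2,4) by simp
  with fs assms(1,2) show "fs = es"
    by (intro spike_shape_rec_unique spike_shape_imp_rec) simp_all
qed (use assms in blast)

subsection \<open>The minimal spike of degree \<open>m (2^d - 1)\<close>\<close>

lemma length_ge_if_sum_pow2_minus_one_eq:
  assumes "m \<ge> 1" "int d > delta m" "(\<Sum>u\<leftarrow>us. 2 ^ u - 1) = m * (2 ^ d - 1)"
  shows "m \<le> length us"
proof (rule ccontr)
  define y where "y = length us"
  assume "\<not> m \<le> length us"
  then have "y < m" by (simp add: y_def)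
  obtain j q where q: "odd q" "m = 2 ^ j * q"
    using pow2_mult_odd_decomp[of m] assms(1) by (metis Suc_le_eq One_nat_def)
  have m2d: "m * 2 ^ d = 2 ^ (j + d) * q" using q by (simp add: power_add)
  have "m * (2 ^ d - 1) + m = m * 2 ^ d" by (simp add: diff_mult_distrib2)
  then have "(\<Sum>u\<leftarrow>us. (2::nat) ^ u) = m * 2 ^ d - (m - y)"
    using sum_list_pow2_minus_one[of us] assms(3) \<open>y < m\<close> by (simp add: y_def)
  then have "alpha (m * 2 ^ d - (m - y)) \<le> y"
    using alpha_sum_list_pow2_le[of us] by (simp add: y_def)
  moreover have "m \<le> m * 2 ^ d" by simp
  moreover have "alpha (m * 2 ^ d) + zeta (m * 2 ^ d) \<le> alpha (m * 2 ^ d - (m - y)) + (m - y)"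
    using \<open>y < m\<close> \<open>m \<le> m * 2 ^ d\<close> by (intro alpha_diff_ge) linarith+
  moreover have "alpha (m * 2 ^ d) = alpha m" by (metis m2d q(2) alpha_pow2_mult)
  moreover have "zeta (m * 2 ^ d) = j + d" "zeta m = j"
    by (metis m2d q(1) zeta_pow2_mult_odd) (metis q zeta_pow2_mult_odd)
  ultimately show False using assms(2) \<open>y < m\<close> by (simp add: delta_def)
qed

lemma spike_exps_mult_mersenne:
  assumes "m \<ge> 1" "int d > delta m"
  obtains A where "spike_exps (m * (2 ^ d - 1)) = A @ [nat (int d - delta m)]"
    "length A = m - 1" "\<forall>e\<in>set A. nat (int d - delta m) \<le> e"
proof -
  define D where "D = nat (int d - delta m)"
  define n where "n = m * (2 ^ d - 1)"
  obtain j q where q: "odd q" "m = 2 ^ j * q"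
    using pow2_mult_odd_decomp[of m] assms(1) by (metis Suc_le_eq One_nat_def)
  have am: "alpha m = alpha q" "zeta m = j"
    using q by (simp_all add: alpha_pow2_mult zeta_pow2_mult_odd)
  have D: "1 \<le> D" "D \<le> j + d" "alpha q + (j + d) - D = m"
    using assms(2) alpha_le[of m] am by (auto simp: D_def delta_def)
  obtain A where A: "(\<Sum>e\<leftarrow>A @ [D]. (2::nat) ^ e) = 2 ^ (j + d) * q"
    "length (A @ [D]) = alpha q + (j + d) - D" "sorted_wrt (>) A" "\<forall>e\<in>set A. D \<le> e"
    using pow2_mult_odd_as_sum_pow2[OF q(1) D(2)] by blast
  have len: "length (A @ [D]) = m" using A(2) D(3) by simp
  have "n + m = 2 ^ (j + d) * q"
    using q by (simp add: n_def diff_mult_distrib2 power_add)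
  then have sum: "(\<Sum>e\<leftarrow>A @ [D]. 2 ^ e - 1) = n"
    using sum_list_pow2_minus_one[of "A @ [D]"] A(1) len by simp
  have pos: "\<forall>e\<in>set (A @ [D]). e > 0" using A(4) D(1) by auto
  have "mu n = m"
    unfolding mu_def
  proof (rule Least_equality)
    show "\<exists>us. length us = m \<and> (\<forall>u\<in>set us. 0 < u) \<and> (\<Sum>u\<leftarrow>us. 2 ^ u - 1) = n"
      using len pos sum by blast
  qed (use length_ge_if_sum_pow2_minus_one_eq[OF assms] n_def in blast)
  then have "spike_exps n = A @ [D]"
    using spike_exps_eqI spike_shape_snoc[OF A(3,4)] len pos sum by simp
  with that A(4) len show ?thesis by (simp add: D_def n_def)
qed

lemma omega_pow2_minus_one_snoc:
  assumes "\<forall>e\<in>set A. D \<le> e"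
  shows "1 \<le> i \<Longrightarrow> i \<le> D \<Longrightarrow> omega i (map (\<lambda>e. 2 ^ e - 1) (A @ [D])) = length A + 1"
    and "D < i \<Longrightarrow> omega i (map (\<lambda>e. 2 ^ e - 1) (A @ [D])) \<le> length A"
proof -
  have omega: "omega i (map (\<lambda>e. 2 ^ e - 1) (A @ [D]))
      = (\<Sum>e\<leftarrow>A. if i - 1 < e then 1 else 0) + (if i - 1 < D then 1 else 0)"
    unfolding omega_def map_map o_def bin_digit_pow2_minus_one by simp
  have ones: "(\<Sum>e\<leftarrow>A. 1::nat) = length A" using sum_list_triv[of "1::nat" A] by simp
  show "omega i (map (\<lambda>e. 2 ^ e - 1) (A @ [D])) = length A + 1" if "1 \<le> i" "i \<le> D"
  proof -
    have "(\<Sum>e\<leftarrow>A. if i - 1 < e then 1 else 0) = (\<Sum>e\<leftarrow>A. 1::nat)"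
      using assms that by (intro arg_cong[where f = sum_list] map_cong) auto
    with ones that show ?thesis unfolding omega by simp
  qed
  show "omega i (map (\<lambda>e. 2 ^ e - 1) (A @ [D])) \<le> length A" if "D < i"
  proof -
    have "\<not> i - 1 < D" using that by linarith
    then show ?thesis
      using sum_list_mono[of A "\<lambda>e. if i - 1 < e then 1 else 0" "\<lambda>_. 1::nat"] ones
      unfolding omega by simp
  qed
qed

theorem proposition3:
  fixes k d :: nat
  assumes "k \<ge> 3" and "d > 0"
    and "int d > delta (k - 2)"
  shows "(\<forall>i. 1 \<le> i \<and> int i \<le> int d - delta (k - 2) \<longrightarrow>
            omega i (minimal_spike ((k - 2) * (2 ^ d - 1))) = k - 2)
       \<and> (\<forall>i. int i > int d - delta (k - 2) \<longrightarrow>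
            omega i (minimal_spike ((k - 2) * (2 ^ d - 1))) < k - 2)"
proof -
  define D where "D = nat (int d - delta (k - 2))"
  have "k - 2 \<ge> 1" using assms(1) by simp
  then obtain A where A: "spike_exps ((k - 2) * (2 ^ d - 1)) = A @ [D]"
    "length A = k - 2 - 1" "\<forall>e\<in>set A. D \<le> e"
    using spike_exps_mult_mersenne[of "k - 2" d] assms(3) unfolding D_def by blast
  have D: "int D = int d - delta (k - 2)" using assms(3) by (simp add: D_def)
  show ?thesis
  proof (intro conjI allI impI)
    fix i assume "1 \<le> i \<and> int i \<le> int d - delta (k - 2)"
    with D show "omega i (minimal_spike ((k - 2) * (2 ^ d - 1))) = k - 2"
      unfolding minimal_spike_def A(1)
      using omega_pow2_minus_one_snoc(1)[OF A(3), of i] A(2) assms(1) by simp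
  next
    fix i assume "int i > int d - delta (k - 2)"
    with D show "omega i (minimal_spike ((k - 2) * (2 ^ d - 1))) < k - 2"
      unfolding minimal_spike_def A(1)
      using omega_pow2_minus_one_snoc(2)[OF A(3), of i] A(2) assms(1) by simp
  qed
qed

end
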